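(* Let $\mathbf x_1,\dots,\mathbf x_l\in\mathbb{R}^n$, $y_1,\dots,y_l\in\{1,-1\}$, $\bar{\mathbf x}_i=y_i\mathbf x_i$. For $s>0$ let $\mathcal F_s=\{\mathbf w\in\mathbb{R}^n:\sum_{i=1}^l[1-y_i\mathbf w^T\mathbf x_i]_+\le s\}$ and, when $\mathcal F_s\neq\emptyset$, let $\mathbf w^*(s)$ be the optimal solution of $\min_{\mathbf w\in\mathcal F_s}\frac12\|\mathbf w\|^2$. Let $s_a>s_b>0$, let $\mathbf w^*(s_a)$ be the optimal solution at $s=s_a$ (assumed nonzero) and $\hat{\mathbf w}(s_b)\in\mathcal F_{s_b}$ a feasible point at $s=s_b$. Define $$\rho=-\|\mathbf w^*(s_a)\|^2+\tfrac12\langle\mathbf w^*(s_a),\hat{\mathbf w}(s_b)\rangle,\qquad \mathbf v^\perp=\mathbf v-\tfrac{\mathbf v^T\mathbf w^*(s_a)}{\|\mathbf w^*(s_a)\|^2}\mathbf w^*(s_a)\ \ (\mathbf v\in\mathbb{R}^n),$$ $$\ell_i=-\tfrac{\langle\mathbf w^*(s_a),\bar{\mathbf x}_i\rangle}{\|\mathbf w^*(s_a)\|^2}\rho+\tfrac12\langle\hat{\mathbf w}(s_b),\bar{\mathbf x}_i\rangle-\|\bar{\mathbf x}_i^\perp\|\sqrt{\tfrac14\|\hat{\mathbf w}(s_b)\|^2-\tfrac{\rho^2}{\|\mathbf w^*(s_a)\|^2}},$$ and $u_i=\tfrac12\big(\langle\hat{\mathbf w}(s_b),\bar{\mathbf x}_i\rangle+\|\hat{\mathbf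 w}(s_b)\|\|\bar{\mathbf x}_i\|\big)$ if $\langle\mathbf w^*(s_a),\bar{\mathbf x}_i\rangle\ge-\tfrac{2\|\bar{\mathbf x}_i\|}{\|\hat{\mathbf w}(s_b)\|}\rho$, and otherwise $$u_i=-\tfrac{\langle\mathbf w^*(s_a),\bar{\mathbf x}_i\rangle}{\|\mathbf w^*(s_a)\|^2}\rho+\tfrac12\langle\hat{\mathbf w}(s_b),\bar{\mathbf x}_i\rangle+\|\bar{\mathbf x}_i^\perp\|\sqrt{\tfrac14\|\hat{\mathbf w}(s_b)\|^2-\tfrac{\rho^2}{\|\mathbf w^*(s_a)\|^2}}.$$ Then for all $s\in[s_b,s_a]$: if $\langle\mathbf w^*(s_a),\bar{\mathbf x}_i\rangle>\tfrac{2\|\bar{\mathbf x}_i\|}{\|\hat{\mathbf w}(s_b)\|}\rho$ and $\ell_i>1$, then $\langle\mathbf w^*(s),\bar{\mathbf x}_i\rangle>1$ (i.e., $i\in\mathcal R$); and if $u_i<1$, then $\langle\mathbf w^*(s),\bar{\mathbf x}_i\rangle<1$ (i.e., $i\in\mathcal L$).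
   Context: $[t]_+=\max\{t,0\}$; $\|\cdot\|$ is the Euclidean norm. For the parameter $s$, $\mathcal R=\{i:\langle\mathbf w^*(s),\bar{\mathbf x}_i\rangle>1\}$ and $\mathcal L=\{i:\langle\mathbf w^*(s),\bar{\mathbf x}_i\rangle<1\}$ (non-support vectors). *)

theory Defs
  imports "HOL-Analysis.Analysis"
begin

definition xbar :: "(nat \<Rightarrow> 'a::euclidean_space) \<Rightarrow> (nat \<Rightarrow> real) \<Rightarrow> nat \<Rightarrow> 'a" where
  "xbar x y i = y i *\<^sub>R x i"

definition feas :: "nat \<Rightarrow> (nat \<Rightarrow> 'a::euclidean_space) \<Rightarrow> (nat \<Rightarrow> real) \<Rightarrow> real \<Rightarrow> 'a set" where
  "feas l x y s = {w. (\<Sum>i<l. max (1 - y i * (w \<bullet> x i)) 0) \<le> s}"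

definition is_opt :: "nat \<Rightarrow> (nat \<Rightarrow> 'a::euclidean_space) \<Rightarrow> (nat \<Rightarrow> real) \<Rightarrow> real \<Rightarrow> 'a \<Rightarrow> bool" where
  "is_opt l x y s w \<longleftrightarrow> w \<in> feas l x y s \<and>
     (\<forall>v \<in> feas l x y s. (1/2) * norm w ^ 2 \<le> (1/2) * norm v ^ 2)"

definition wstar :: "nat \<Rightarrow> (nat \<Rightarrow> 'a::euclidean_space) \<Rightarrow> (nat \<Rightarrow> real) \<Rightarrow> real \<Rightarrow> 'a" where
  "wstar l x y s = (THE w. is_opt l x y s w)"

definition perp :: "'a::euclidean_space \<Rightarrow> 'a \<Rightarrow> 'a" where
  "perp w v = v - ((v \<bullet> w) / norm w ^ 2) *\<^sub>R w"

end

theory Submission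
  imports Defs
begin

text \<open>Fix \<open>s \<in> [sb, sa]\<close> and write \<open>w = wstar s\<close>, \<open>wa = wstar sa\<close>. Since \<open>F\<^sub>s \<subseteq> F\<^sub>s\<^sub>a\<close>,
  \<open>w\<close> is feasible at \<open>sa\<close>, so the variational inequality characterising \<open>wa\<close> as the
  projection of \<open>0\<close> onto the closed convex set \<open>F\<^sub>s\<^sub>a\<close> gives \<open>wa \<bullet> w \<ge> \<parallel>wa\<parallel>\<^sup>2\<close>. Since
  \<open>wh \<in> F\<^sub>s\<^sub>b \<subseteq> F\<^sub>s\<close>, the variational inequality at \<open>s\<close> gives \<open>w \<bullet> (wh - w) \<ge> 0\<close>, i.e.
  \<open>\<parallel>w - wh/2\<parallel> \<le> \<parallel>wh\<parallel>/2\<close>. So \<open>w\<close> lies in a ball cut by a half-space, and \<open>\<ell>\<^sub>i\<close>, \<open>u\<^sub>i\<close> bound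
  \<open>w \<bullet> x\<^sub>i\<close> on this region: splitting vectors into their components along \<open>wa\<close> and
  orthogonal to \<open>wa\<close> reduces the lower bound to minimising a linear function over a disc
  cut by a line; the upper bound is the lower bound for \<open>-x\<^sub>i\<close>, or Cauchy-Schwarz on the
  ball when the cut is inactive.\<close>

lemma closed_feas: "closed (feas l x y s)"
  unfolding feas_def by (intro closed_Collect_le continuous_intros)

lemma hinge_loss_convex_ineq:
  fixes u v z :: "'a::real_inner" and a b c :: real
  assumes "0 \<le> a" "0 \<le> b" "a + b = 1"
  shows "max (1 - c * ((a *\<^sub>R u + b *\<^sub>R v) \<bullet> z)) 0
      \<le> a * max (1 - c * (u \<bullet> z)) 0 + b * max (1 - c * (v \<bullet> z)) 0"
proof -
  have "1 - c * ((a *\<^sub>R u + b *\<^sub>R v) \<bullet> z) = a * (1 - c * (u \<bullet> z)) + b * (1 - c * (v \<bullet> z))"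
    using assms by (simp add: inner_add_left algebra_simps)
  moreover have "a * (1 - c * (u \<bullet> z)) \<le> a * max (1 - c * (u \<bullet> z)) 0"
    and "b * (1 - c * (v \<bullet> z)) \<le> b * max (1 - c * (v \<bullet> z)) 0"
    using assms by (intro mult_left_mono; simp)+
  ultimately show ?thesis
    using assms by simp
qed

lemma convex_feas: "convex (feas l x y s)"
proof (rule convexI)
  fix u v and a b :: real
  assume u: "u \<in> feas l x y s" and v: "v \<in> feas l x y s" and ab: "0 \<le> a" "0 \<le> b" "a + b = 1"
  have "(\<Sum>i<l. max (1 - y i * ((a *\<^sub>R u + b *\<^sub>R v) \<bullet> x i)) 0)
      \<le> (\<Sum>i<l. a * max (1 - y i * (u \<bullet> x i)) 0 + b * max (1 - y i * (v \<bullet> x i)) 0)"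
    using hinge_loss_convex_ineq[OF ab] by (intro sum_mono)
  also have "\<dots> = a * (\<Sum>i<l. max (1 - y i * (u \<bullet> x i)) 0) + b * (\<Sum>i<l. max (1 - y i * (v \<bullet> x i)) 0)"
    by (simp add: sum.distrib sum_distrib_left)
  also have "\<dots> \<le> a * s + b * s"
    using u v ab unfolding feas_def by (intro add_mono mult_left_mono) auto
  also have "\<dots> = s"
    using ab by (metis distrib_right mult_1)
  finally show "a *\<^sub>R u + b *\<^sub>R v \<in> feas l x y s"
    unfolding feas_def by simp
qed

lemma feas_mono: "s \<le> t \<Longrightarrow> feas l x y s \<subseteq> feas l x y t"
  unfolding feas_def by auto

lemma is_opt_iff_closest_point:
  assumes "feas l x y s \<noteq> {}"
  shows "is_opt l x y s w \<longleftrightarrow> w = closest_point (feas l x y s) 0"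
proof -
  have "is_opt l x y s w \<longleftrightarrow> w \<in> feas l x y s \<and> (\<forall>v \<in> feas l x y s. dist 0 w \<le> dist 0 v)"
    unfolding is_opt_def by (simp add: dist_norm power_mono_iff)
  also have "\<dots> \<longleftrightarrow> w = closest_point (feas l x y s) 0"
    using closest_point_exists[OF closed_feas assms, of 0]
      any_closest_point_unique[OF convex_feas closed_feas, where x=w and a=0]
    by blast
  finally show ?thesis .
qed

lemma wstar_eq_closest_point:
  "feas l x y s \<noteq> {} \<Longrightarrow> wstar l x y s = closest_point (feas l x y s) 0"
  by (simp add: wstar_def is_opt_iff_closest_point)

lemma wstar_in_feas: "feas l x y s \<noteq> {} \<Longrightarrow> wstar l x y s \<in> feas l x y s"
  using closest_point_in_set[OF closed_feas] wstar_eq_closest_point by metis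

lemma wstar_variational_ineq:
  assumes "v \<in> feas l x y s"
  shows "wstar l x y s \<bullet> (v - wstar l x y s) \<ge> 0"
proof -
  have ne: "feas l x y s \<noteq> {}"
    using assms by auto
  have "(0 - wstar l x y s) \<bullet> (v - wstar l x y s) \<le> 0"
    using closest_point_exists[OF closed_feas ne, of 0] assms
    by (intro any_closest_point_dot[OF convex_feas closed_feas]) (auto simp: wstar_eq_closest_point[OF ne])
  then show ?thesis
    by simp
qed

lemma wstar_localization:
  assumes "sb \<le> s" "s \<le> sa" "wh \<in> feas l x y sb"
  shows "wstar l x y sa \<bullet> wstar l x y s \<ge> norm (wstar l x y sa) ^ 2"
    and "wstar l x y s \<bullet> (wh - wstar l x y s) \<ge> 0"
proof -
  have wh_s: "wh \<in> feas l x y s"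
    using assms feas_mono by blast
  then have "wstar l x y s \<in> feas l x y sa"
    using wstar_in_feas feas_mono[OF \<open>s \<le> sa\<close>] by blast
  from wstar_variational_ineq[OF this]
  show "wstar l x y sa \<bullet> wstar l x y s \<ge> norm (wstar l x y sa) ^ 2"
    by (simp add: inner_diff_right power2_norm_eq_inner)
  show "wstar l x y s \<bullet> (wh - wstar l x y s) \<ge> 0"
    using wstar_variational_ineq[OF wh_s] .
qed

lemma cut_disc_multiplier_nonneg:
  fixes a0 r be p R B :: real
  assumes R: "R > 0" and r: "r \<ge> 0" "a0\<^sup>2 + r\<^sup>2 = R\<^sup>2" and p: "p \<ge> 0" "be\<^sup>2 + p\<^sup>2 = B\<^sup>2"
    and B: "B \<ge> 0" and corner: "R * be + B * a0 \<ge> 0"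
  shows "be * r + p * a0 \<ge> 0"
proof -
  have "r\<^sup>2 = R\<^sup>2 - a0\<^sup>2" "p\<^sup>2 = B\<^sup>2 - be\<^sup>2"
    using r(2) p(2) by linarith+
  then have "(be * r)\<^sup>2 - (p * a0)\<^sup>2 = be\<^sup>2 * (R\<^sup>2 - a0\<^sup>2) - (B\<^sup>2 - be\<^sup>2) * a0\<^sup>2"
    by (simp add: power_mult_distrib)
  also have "\<dots> = (R * be)\<^sup>2 - (B * a0)\<^sup>2"
    by (simp add: power_mult_distrib algebra_simps)
  finally have squares: "(be * r)\<^sup>2 - (p * a0)\<^sup>2 = (R * be)\<^sup>2 - (B * a0)\<^sup>2" .
  consider "a0 \<ge> 0" "be \<ge> 0" | "a0 < 0" | "a0 \<ge> 0" "be < 0"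
    by linarith
  then show ?thesis
  proof cases
    case 1
    then show ?thesis
      using r(1) p(1) by simp
  next
    case 2
    have "B * (- a0) \<ge> 0"
      using 2 B by (simp add: mult_nonneg_nonpos)
    moreover have "R * be \<ge> B * (- a0)"
      using corner by simp
    ultimately have "(B * a0)\<^sup>2 \<le> (R * be)\<^sup>2" and "R * be \<ge> 0"
      using power_mono[of "B * (- a0)" "R * be" 2] by simp_all
    then have sq: "(p * (- a0))\<^sup>2 \<le> (be * r)\<^sup>2" and "be \<ge> 0"
      using squares R by (simp_all add: zero_le_mult_iff)
    have "p * (- a0) \<le> be * r"
      using power2_le_imp_le[OF sq] r(1) \<open>be \<ge> 0\<close> by simp
    then show ?thesis
      by simp
  next
    case 3
    have "R * (- be) \<ge> 0"
      using 3 R by (simp add: mult_nonneg_nonpos)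
    moreover have "B * a0 \<ge> R * (- be)"
      using corner by simp
    ultimately have "(R * be)\<^sup>2 \<le> (B * a0)\<^sup>2"
      using power_mono[of "R * (- be)" "B * a0" 2] by simp
    then have sq: "(- be * r)\<^sup>2 \<le> (p * a0)\<^sup>2"
      using squares by simp
    have "- be * r \<le> p * a0"
      using power2_le_imp_le[OF sq] 3 p(1) by simp
    then show ?thesis
      by simp
  qed
qed

lemma linear_min_on_cut_disc:
  fixes al q a0 r be p R B :: real
  assumes R: "R > 0" and cut: "al \<ge> a0" and disc: "al\<^sup>2 + q\<^sup>2 \<le> R\<^sup>2"
    and r: "r \<ge> 0" "a0\<^sup>2 + r\<^sup>2 = R\<^sup>2" and p: "p \<ge> 0" "be\<^sup>2 + p\<^sup>2 = B\<^sup>2"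
    and B: "B \<ge> 0" and corner: "R * be + B * a0 \<ge> 0"
  shows "al * be - p * q \<ge> a0 * be - p * r"
proof (cases "r > 0")
  case True
  \<comment> \<open>Multiplied by \<open>r\<close>, the difference splits into the cut constraint weighted by the
      multiplier \<open>be * r + p * a0\<close> and the disc constraint tested at the corner \<open>(a0, r)\<close>.\<close>
  have "be * r + p * a0 \<ge> 0"
    using cut_disc_multiplier_nonneg[OF R r p B corner] .
  then have "(be * r + p * a0) * (al - a0) \<ge> 0"
    using cut by simp
  moreover have "al * a0 + q * r \<le> a0\<^sup>2 + r\<^sup>2"
  proof -
    have "0 \<le> (al - a0)\<^sup>2 + (q - r)\<^sup>2"
      by simp
    then show ?thesis
      using disc r(2) by (simp add: power2_eq_square algebra_simps)
  qed
  then have "p * (a0\<^sup>2 + r\<^sup>2 - (al * a0 + q * r)) \<ge> 0"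
    using p(1) by simp
  ultimately have "0 \<le> (be * r + p * a0) * (al - a0) + p * (a0\<^sup>2 + r\<^sup>2 - (al * a0 + q * r))"
    by linarith
  also have "\<dots> = r * ((al * be - p * q) - (a0 * be - p * r))"
    by (simp add: power2_eq_square algebra_simps)
  finally show ?thesis
    using True by (simp add: zero_le_mult_iff)
next
  case False
  then have "r = 0"
    using r(1) by simp
  then have "a0\<^sup>2 = R\<^sup>2"
    using r(2) by simp
  then consider "a0 = R" | "a0 = - R"
    by (auto simp: power2_eq_iff)
  then show ?thesis
  proof cases
    case 1
    have "al\<^sup>2 \<le> R\<^sup>2"
      using disc zero_le_power2[of q] by linarith
    then have "al \<le> R"
      by (rule power2_le_imp_le) (use R in simp)
    then have "al = R"
      using cut 1 by simp
    then have "q = 0"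
      using disc by simp
    then show ?thesis
      using \<open>al = R\<close> \<open>r = 0\<close> 1 by simp
  next
    case 2
    then have "R * (be - B) \<ge> 0"
      using corner by (simp add: algebra_simps)
    then have "be \<ge> B"
      using R by (simp add: zero_le_mult_iff)
    then have "B\<^sup>2 \<le> be\<^sup>2"
      using B by (intro power_mono)
    then have "p\<^sup>2 \<le> 0"
      using p(2) by linarith
    then have "p = 0"
      by simp
    moreover have "(al - a0) * be \<ge> 0"
      using cut \<open>be \<ge> B\<close> B by simp
    ultimately show ?thesis
      by (simp add: algebra_simps)
  qed
qed

lemma inner_perp_decomposition:
  fixes a d b :: "'a::euclidean_space"
  assumes "a \<noteq> 0"
  shows "d \<bullet> b = (a \<bullet> d / norm a) * (a \<bullet> b / norm a) + perp a d \<bullet> perp a b"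
proof -
  have "norm a ^ 2 = a \<bullet> a"
    by (simp add: power2_norm_eq_inner)
  then show ?thesis
    using assms unfolding perp_def
    by (simp add: inner_diff_left inner_diff_right inner_commute power2_eq_square field_simps)
qed

lemma norm_perp_power2:
  fixes a d :: "'a::euclidean_space"
  assumes "a \<noteq> 0"
  shows "norm (perp a d) ^ 2 = norm d ^ 2 - (a \<bullet> d / norm a) ^ 2"
  using inner_perp_decomposition[OF assms, of d d]
  by (simp add: power2_norm_eq_inner[symmetric] power2_eq_square)

text \<open>The last hypothesis says that the cut removes the minimiser \<open>-R b / \<parallel>b\<parallel>\<close> of
  \<open>\<langle>\<cdot>, b\<rangle>\<close> over the whole ball. In the coordinates \<open>(a \<bullet> \<cdot> / \<parallel>a\<parallel>, \<parallel>perp a \<cdot>\<parallel>)\<close> the claim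
  becomes \<open>linear_min_on_cut_disc\<close>.\<close>

lemma inner_ge_on_cut_ball:
  fixes a b d :: "'a::euclidean_space"
  assumes a: "a \<noteq> 0" and R: "R > 0" and ball: "norm d \<le> R" and cut: "a \<bullet> d \<ge> - rho"
    and rho: "rho \<le> norm a * R" and corner: "norm b * rho \<le> (a \<bullet> b) * R"
  shows "d \<bullet> b \<ge> - ((a \<bullet> b) / norm a ^ 2) * rho - norm (perp a b) * sqrt (R\<^sup>2 - rho\<^sup>2 / norm a ^ 2)"
proof -
  have na: "norm a > 0"
    using a by simp
  define al where "al = a \<bullet> d / norm a"
  define q where "q = norm (perp a d)"
  define a0 where "a0 = - rho / norm a"
  define r where "r = sqrt (R\<^sup>2 - rho\<^sup>2 / norm a ^ 2)"
  define be where "be = a \<bullet> b / norm a"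
  define p where "p = norm (perp a b)"
  have "- rho \<le> norm a * R"
    using cut Cauchy_Schwarz_ineq2[of a d, THEN abs_le_D1] mult_left_mono[OF ball norm_ge_zero, of a]
    by linarith
  then have "\<bar>rho\<bar> \<le> norm a * R"
    using rho by linarith
  then have "rho\<^sup>2 \<le> (norm a * R)\<^sup>2"
    using power_mono[of "\<bar>rho\<bar>" "norm a * R" 2] by simp
  then have "rho\<^sup>2 / norm a ^ 2 \<le> R\<^sup>2"
    using na by (simp add: pos_divide_le_eq power_mult_distrib mult.commute)
  then have r: "r \<ge> 0" "a0\<^sup>2 + r\<^sup>2 = R\<^sup>2"
    unfolding r_def a0_def by (simp_all add: power_divide)
  have "al \<ge> a0"
    unfolding al_def a0_def using divide_right_mono[OF cut, of "norm a"] by simp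
  moreover have "al\<^sup>2 + q\<^sup>2 \<le> R\<^sup>2"
    unfolding al_def q_def using norm_perp_power2[OF a, of d] ball by (simp add: power_mono)
  moreover have "be\<^sup>2 + p\<^sup>2 = (norm b)\<^sup>2"
    unfolding p_def be_def using norm_perp_power2[OF a, of b] by simp
  moreover have "R * be + norm b * a0 \<ge> 0"
    unfolding be_def a0_def using corner na by (simp add: field_simps)
  ultimately have "al * be - p * q \<ge> a0 * be - p * r"
    using linear_min_on_cut_disc[OF R _ _ r, of al q p be "norm b"] by (simp add: p_def)
  moreover have "d \<bullet> b \<ge> al * be - p * q"
    using inner_perp_decomposition[OF a, of d b] Cauchy_Schwarz_ineq2[of "perp a d" "perp a b"]
    unfolding al_def be_def p_def q_def by (simp add: mult.commute)
  moreover have "a0 * be - p * r = - ((a \<bullet> b) / norm a ^ 2) * rho - p * r"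
    unfolding a0_def be_def by (simp add: power2_eq_square)
  ultimately show ?thesis
    unfolding p_def r_def by linarith
qed

lemma cut_ball_of_localization:
  fixes wa w wh :: "'a::euclidean_space"
  assumes wa: "wa \<noteq> 0" and half: "wa \<bullet> w \<ge> norm wa ^ 2" and ball: "w \<bullet> (wh - w) \<ge> 0"
    and rho: "rho = - (norm wa ^ 2) + (1/2) * (wa \<bullet> wh)"
  shows "wh \<noteq> 0"
    and "norm (w - (1/2) *\<^sub>R wh) \<le> norm wh / 2"
    and "wa \<bullet> (w - (1/2) *\<^sub>R wh) \<ge> - rho"
    and "rho \<le> norm wa * (norm wh / 2)"
proof -
  show "wh \<noteq> 0"
  proof
    assume "wh = 0"
    then have "w \<bullet> w \<le> 0"
      using ball by (simp add: inner_diff_right)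
    then have "w = 0"
      using inner_ge_zero[of w] by simp
    then show False
      using half wa by simp
  qed
  have "norm (w - (1/2) *\<^sub>R wh) ^ 2 = (norm wh / 2) ^ 2 - w \<bullet> (wh - w)"
    by (simp add: power2_norm_eq_inner inner_diff_left inner_diff_right inner_commute[of wh w]
        power_divide field_simps)
  then have "norm (w - (1/2) *\<^sub>R wh) ^ 2 \<le> (norm wh / 2) ^ 2"
    using ball by linarith
  then show "norm (w - (1/2) *\<^sub>R wh) \<le> norm wh / 2"
    by (rule power2_le_imp_le) simp
  show "wa \<bullet> (w - (1/2) *\<^sub>R wh) \<ge> - rho"
    using half rho by (simp add: inner_diff_right)
  show "rho \<le> norm wa * (norm wh / 2)"
    using rho Cauchy_Schwarz_ineq2[of wa wh, THEN abs_le_D1]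
    by (simp add: field_simps) (use zero_le_power2[of "norm wa"] in linarith)
qed

lemma localized_inner_lower_bound:
  fixes wa w wh b :: "'a::euclidean_space"
  assumes wa: "wa \<noteq> 0" and half: "wa \<bullet> w \<ge> norm wa ^ 2" and ball: "w \<bullet> (wh - w) \<ge> 0"
    and rho: "rho = - (norm wa ^ 2) + (1/2) * (wa \<bullet> wh)"
    and corner: "wa \<bullet> b \<ge> (2 * norm b / norm wh) * rho"
  shows "w \<bullet> b \<ge> - ((wa \<bullet> b) / norm wa ^ 2) * rho + (1/2) * (wh \<bullet> b)
           - norm (perp wa b) * sqrt ((1/4) * norm wh ^ 2 - rho ^ 2 / norm wa ^ 2)"
proof -
  note cut_ball = cut_ball_of_localization[OF wa half ball rho]
  define R where "R = norm wh / 2"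
  have R: "R > 0"
    using cut_ball(1) unfolding R_def by simp
  have "norm b * rho = ((2 * norm b / norm wh) * rho) * R"
    unfolding R_def using cut_ball(1) by simp
  also have "\<dots> \<le> (wa \<bullet> b) * R"
    using corner R by (intro mult_right_mono) simp_all
  finally have "(w - (1/2) *\<^sub>R wh) \<bullet> b
      \<ge> - ((wa \<bullet> b) / norm wa ^ 2) * rho - norm (perp wa b) * sqrt (R\<^sup>2 - rho\<^sup>2 / norm wa ^ 2)"
    using inner_ge_on_cut_ball[OF wa R] cut_ball unfolding R_def by blast
  moreover have "(1/4) * norm wh ^ 2 = R\<^sup>2"
    unfolding R_def by (simp add: power_divide)
  ultimately show ?thesis
    by (simp add: inner_diff_left)
qed

lemma localized_inner_upper_bound:
  fixes wa w wh b :: "'a::euclidean_space"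
  assumes wa: "wa \<noteq> 0" and half: "wa \<bullet> w \<ge> norm wa ^ 2" and ball: "w \<bullet> (wh - w) \<ge> 0"
    and rho: "rho = - (norm wa ^ 2) + (1/2) * (wa \<bullet> wh)"
  shows "w \<bullet> b \<le> (if wa \<bullet> b \<ge> - (2 * norm b / norm wh) * rho
                     then (1/2) * (wh \<bullet> b + norm wh * norm b)
                     else - ((wa \<bullet> b) / norm wa ^ 2) * rho + (1/2) * (wh \<bullet> b)
                       + norm (perp wa b) * sqrt ((1/4) * norm wh ^ 2 - rho ^ 2 / norm wa ^ 2))"
proof (cases "wa \<bullet> b \<ge> - (2 * norm b / norm wh) * rho")
  case True
  have "(w - (1/2) *\<^sub>R wh) \<bullet> b \<le> norm (w - (1/2) *\<^sub>R wh) * norm b"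
    by (rule Cauchy_Schwarz_ineq2[THEN abs_le_D1])
  also have "\<dots> \<le> norm wh / 2 * norm b"
    using cut_ball_of_localization(2)[OF wa half ball rho] by (rule mult_right_mono) simp
  finally show ?thesis
    using True by (simp add: inner_diff_left algebra_simps)
next
  case False
  then have "wa \<bullet> (- b) \<ge> (2 * norm (- b) / norm wh) * rho"
    by simp
  moreover have "perp wa (- b) = - perp wa b"
    unfolding perp_def by (simp add: algebra_simps)
  ultimately show ?thesis
    using localized_inner_lower_bound[OF wa half ball rho, of "- b"] False by simp
qed

theorem theorem5:
  fixes l :: nat and x :: "nat \<Rightarrow> 'a::euclidean_space" and y :: "nat \<Rightarrow> real"
    and sa sb :: real and wh :: 'a
  assumes hy: "\<forall>i<l. y i = 1 \<or> y i = -1"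
    and hs: "sa > sb" "sb > 0"
    and hwa: "wstar l x y sa \<noteq> 0"
    and hwh: "wh \<in> feas l x y sb"
  shows "let wa = wstar l x y sa;
             rho = - (norm wa ^ 2) + (1/2) * (wa \<bullet> wh);
             r = sqrt ((1/4) * norm wh ^ 2 - rho ^ 2 / norm wa ^ 2);
             lo = (\<lambda>i. - ((wa \<bullet> xbar x y i) / norm wa ^ 2) * rho + (1/2) * (wh \<bullet> xbar x y i)
                        - norm (perp wa (xbar x y i)) * r);
             up = (\<lambda>i. if wa \<bullet> xbar x y i \<ge> - (2 * norm (xbar x y i) / norm wh) * rho
                       then (1/2) * (wh \<bullet> xbar x y i + norm wh * norm (xbar x y i))
                       else - ((wa \<bullet> xbar x y i) / norm wa ^ 2) * rho + (1/2) * (wh \<bullet> xbar x y i)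
                        + norm (perp wa (xbar x y i)) * r)
         in \<forall>s \<in> {sb..sa}. \<forall>i<l.
              ((wa \<bullet> xbar x y i > (2 * norm (xbar x y i) / norm wh) * rho \<and> lo i > 1
                  \<longrightarrow> wstar l x y s \<bullet> xbar x y i > 1)
             \<and> (up i < 1 \<longrightarrow> wstar l x y s \<bullet> xbar x y i < 1))"
proof (unfold Let_def, intro ballI allI conjI impI, goal_cases lower upper)
  case (lower s i)
  then have "wstar l x y sa \<bullet> wstar l x y s \<ge> norm (wstar l x y sa) ^ 2"
    and "wstar l x y s \<bullet> (wh - wstar l x y s) \<ge> 0"
    using wstar_localization[OF _ _ hwh] by auto
  from localized_inner_lower_bound[OF hwa this refl, of "xbar x y i"]
  show ?case
    using lower by linarith
next
  case (upper s i)
  then have "wstar l x y sa \<bullet> wstar l x y s \<ge> norm (wstar l x y sa) ^ 2"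
    and "wstar l x y s \<bullet> (wh - wstar l x y s) \<ge> 0"
    using wstar_localization[OF _ _ hwh] by auto
  from localized_inner_upper_bound[OF hwa this refl, of "xbar x y i"]
  show ?case
    using upper by linarith
qed

end
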